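(* Let $d$ be a positive integer. For all integers $t\ge1$ and $k\in[0,d-1]$ there exist constants $C=C(t,k,d)$ and $T=T(t,k,d)$ such that every set $A\subseteq\mathbb{R}^d$ satisfying $P(A;T,k,d)$ has a subset $A_{(C)}\subseteq A$ with $|A_{(C)}|\le C$ satisfying $P(A_{(C)};t,k,d)$.
   Context: For $A\subseteq\mathbb{R}^d$, positive integer $t$ and integer $0\le k<d$, $P(A;t,k,d)$ denotes the property that $A$ is not contained in the union of any $t$ translates of a single $k$-dimensional linear subspace of $\mathbb{R}^d$. *)

theory Defs
  imports "HOL-Analysis.Analysis"
begin

text \<open>The ambient space R^d is the type real^'n, d = CARD('n).\<close>
definition P_prop :: "(real ^ 'n) set \<Rightarrow> nat \<Rightarrow> nat \<Rightarrow> bool" where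
  "P_prop A t k \<longleftrightarrow>
     \<not> (\<exists>V c. subspace V \<and> dim V = k \<and> A \<subseteq> (\<Union>i<t. (\<lambda>v. c i + v) ` V))"

end

theory Submission
  imports Defs
begin

text \<open>One can take T = t. Induct on the codimension k - dim U of a subspace U, for sets A that
  are not covered by t translates of any k-dimensional subspace containing U. Greedily choose t + 1 points of A no two of which differ by a vector of U.
  If dim U = k these points alone cannot be covered. Otherwise every difference x - y of two
  of them enlarges U by one dimension, and induction gives a bounded witness B(x,y) for the
  enlarged subspace. Any covering of the union of the points and all B(x,y) by t translates
  of some V containing U puts two of the t + 1 points into one translate, so x - y lies in V
  and V also covers B(x,y), a contradiction.\<close>

definition translate_coverable :: "'a::real_vector set \<Rightarrow> nat \<Rightarrow> nat \<Rightarrow> 'a set \<Rightarrow> bool" where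
  "translate_coverable U t k A \<longleftrightarrow>
     (\<exists>V c. subspace V \<and> U \<subseteq> V \<and> dim V = k \<and> A \<subseteq> (\<Union>i<t. (\<lambda>v. c i + v) ` V))"

lemma translate_coverable_mono:
  "translate_coverable U' t k A \<Longrightarrow> U \<subseteq> U' \<Longrightarrow> B \<subseteq> A \<Longrightarrow> translate_coverable U t k B"
  unfolding translate_coverable_def by blast

lemma P_prop_iff_not_translate_coverable_0:
  "P_prop A t k \<longleftrightarrow> \<not> translate_coverable {0} t k A"
  unfolding P_prop_def translate_coverable_def by (auto simp: subspace_0)

lemma subspace_extend_to_dim:
  fixes U :: "'a::euclidean_space set"
  assumes "subspace U" "dim U \<le> k" "k \<le> DIM('a)"
  shows "\<exists>V. subspace V \<and> U \<subseteq> V \<and> dim V = k"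
  using assms
proof (induction "k - dim U" arbitrary: U)
  case 0
  then show ?case by auto
next
  case (Suc j)
  have "dim U \<noteq> DIM('a)"
    using Suc.hyps Suc.prems by linarith
  then have "span U \<noteq> UNIV"
    by (simp add: dim_eq_full)
  then obtain a where a: "a \<notin> span U" by blast
  let ?U' = "span (insert a U)"
  have "dim ?U' = Suc (dim U)"
    using a by (simp add: dim_insert dim_span)
  then have "j = k - dim ?U'" "dim ?U' \<le> k"
    using Suc.hyps(2) by simp_all
  then obtain V where "subspace V" "?U' \<subseteq> V" "dim V = k"
    using Suc.hyps(1) Suc.prems(3) subspace_span by blast
  moreover have "U \<subseteq> ?U'"
    by (meson span_superset subset_insertI subset_trans)
  ultimately show ?case by blast
qed

lemma translates_pigeonhole:
  assumes "subspace V" "finite S" "card S > t" "S \<subseteq> (\<Union>i<t. (\<lambda>v. c i + v) ` V)"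
  shows "\<exists>x\<in>S. \<exists>y\<in>S. x \<noteq> y \<and> x - y \<in> V"
proof -
  define f where "f s = (SOME i. i < t \<and> s \<in> (\<lambda>v. c i + v) ` V)" for s
  have f: "f s < t \<and> s \<in> (\<lambda>v. c (f s) + v) ` V" if "s \<in> S" for s
    unfolding f_def by (rule someI_ex) (use assms(4) that in blast)
  have "\<not> inj_on f S"
  proof
    assume "inj_on f S"
    then have "card S \<le> card {..<t}"
      by (rule card_inj_on_le) (use f in auto)
    with assms(3) show False by simp
  qed
  then obtain x y where xy: "x \<in> S" "y \<in> S" "x \<noteq> y" "f x = f y"
    unfolding inj_on_def by blast
  then obtain v w where "v \<in> V" "w \<in> V" "x - y = (c (f x) + v) - (c (f x) + w)"
    using f[OF xy(1)] f[OF xy(2)] by (metis imageE)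
  then have "x - y \<in> V"
    using assms(1) by (simp add: subspace_diff)
  with xy show ?thesis by blast
qed

lemma translates_of_finite_set:
  assumes "finite C" "card C \<le> t"
  shows "\<exists>c. (\<Union>x\<in>C. (\<lambda>v. x + v) ` V) \<subseteq> (\<Union>i<t. (\<lambda>v. c i + v) ` V)"
proof -
  obtain h where "bij_betw h {0..<card C} C"
    using ex_bij_betw_nat_finite[OF assms(1)] by blast
  then have C: "h ` {..<card C} = C"
    by (simp add: bij_betw_def lessThan_atLeast0)
  have "(\<Union>x\<in>h ` {..<card C}. (\<lambda>v. x + v) ` V) = (\<Union>i<card C. (\<lambda>v. h i + v) ` V)"
    by simp
  also have "\<dots> \<subseteq> (\<Union>i<t. (\<lambda>v. h i + v) ` V)"
    using assms(2) by (intro UN_mono) auto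
  finally show ?thesis
    unfolding C by blast
qed

lemma exists_separated_subset:
  fixes U :: "'a::euclidean_space set"
  assumes "subspace U" "dim U \<le> k" "k \<le> DIM('a)" "\<not> translate_coverable U t k A"
  shows "\<exists>S\<subseteq>A. finite S \<and> card S = Suc t \<and> pairwise (\<lambda>x y. x - y \<notin> U) S"
proof -
  obtain V where V: "subspace V" "U \<subseteq> V" "dim V = k"
    using subspace_extend_to_dim assms(1-3) by blast
  have uncovered: "\<exists>a\<in>A. \<forall>x\<in>C. a - x \<notin> U" if C: "finite C" "card C \<le> t" for C
  proof (rule ccontr)
    assume "\<not> ?thesis"
    then have "A \<subseteq> (\<Union>x\<in>C. (\<lambda>v. x + v) ` V)"
      using V(2) by (force simp: image_iff eq_diff_eq')
    moreover obtain c where "(\<Union>x\<in>C. (\<lambda>v. x + v) ` V) \<subseteq> (\<Union>i<t. (\<lambda>v. c i + v) ` V)"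
      using translates_of_finite_set[OF C] by blast
    ultimately have "A \<subseteq> (\<Union>i<t. (\<lambda>v. c i + v) ` V)"
      by (rule subset_trans)
    with V have "translate_coverable U t k A"
      unfolding translate_coverable_def by blast
    with assms(4) show False ..
  qed
  have "\<exists>S\<subseteq>A. finite S \<and> card S = m \<and> pairwise (\<lambda>x y. x - y \<notin> U) S" if "m \<le> Suc t" for m
    using that
  proof (induction m)
    case 0
    show ?case by (intro exI[of _ "{}"]) auto
  next
    case (Suc m)
    then obtain S where S: "S \<subseteq> A" "finite S" "card S = m" "pairwise (\<lambda>x y. x - y \<notin> U) S"
      by auto
    obtain a where a: "a \<in> A" "\<forall>x\<in>S. a - x \<notin> U"
      using uncovered[OF S(2)] S(3) Suc.prems by auto
    have "\<forall>x\<in>S. x - a \<notin> U"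
      using a(2) assms(1) by (metis minus_diff_eq subspace_neg)
    moreover have "a \<notin> S"
      using a(2) subspace_0[OF assms(1)] by auto
    ultimately show ?case
      using S a by (intro exI[of _ "insert a S"]) (auto simp: pairwise_insert)
  qed
  then show ?thesis by blast
qed

lemma separated_not_translate_coverable:
  fixes U :: "'a::euclidean_space set"
  assumes "subspace U" "dim U = k" "finite S" "card S = Suc t" "pairwise (\<lambda>x y. x - y \<notin> U) S"
  shows "\<not> translate_coverable U t k S"
proof
  assume "translate_coverable U t k S"
  then obtain V c where V: "subspace V" "U \<subseteq> V" "dim V = k" "S \<subseteq> (\<Union>i<t. (\<lambda>v. c i + v) ` V)"
    unfolding translate_coverable_def by blast
  have "U = V"
    using subspace_dim_equal[of U V] assms(1,2) V by simp
  then show False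
    using translates_pigeonhole[OF V(1) assms(3) _ V(4)] assms(4,5) by (auto simp: pairwise_def)
qed

lemma separated_union_not_translate_coverable:
  assumes "finite S" "card S = Suc t"
    and "\<And>x y. x \<in> S \<Longrightarrow> y \<in> S \<Longrightarrow> x \<noteq> y \<Longrightarrow>
           \<not> translate_coverable (span (insert (x - y) U)) t k (B x y)"
  shows "\<not> translate_coverable U t k (S \<union> (\<Union>x\<in>S. \<Union>y\<in>S - {x}. B x y))"
proof
  assume "translate_coverable U t k (S \<union> (\<Union>x\<in>S. \<Union>y\<in>S - {x}. B x y))"
  then obtain V c where V: "subspace V" "U \<subseteq> V" "dim V = k"
      and cover: "S \<union> (\<Union>x\<in>S. \<Union>y\<in>S - {x}. B x y) \<subseteq> (\<Union>i<t. (\<lambda>v. c i + v) ` V)"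
    unfolding translate_coverable_def by blast
  obtain x y where xy: "x \<in> S" "y \<in> S" "x \<noteq> y" "x - y \<in> V"
    using translates_pigeonhole[OF V(1) assms(1) _, of t c] assms(2) cover by auto
  have "span (insert (x - y) U) \<subseteq> V"
    using V(1,2) xy(4) by (intro span_minimal) auto
  moreover have "B x y \<subseteq> (\<Union>i<t. (\<lambda>v. c i + v) ` V)"
    using cover xy(1-3) by blast
  ultimately have "translate_coverable (span (insert (x - y) U)) t k (B x y)"
    unfolding translate_coverable_def using V(1,3) by blast
  with assms(3)[OF xy(1-3)] show False ..
qed

fun witness_bound :: "nat \<Rightarrow> nat \<Rightarrow> nat" where
  "witness_bound t 0 = Suc t"
| "witness_bound t (Suc j) = Suc t + Suc t * t * witness_bound t j"

lemma card_UN_le_mult: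
  assumes "finite I" "\<And>i. i \<in> I \<Longrightarrow> card (B i) \<le> b"
  shows "card (\<Union>i\<in>I. B i) \<le> card I * b"
proof -
  have "card (\<Union>i\<in>I. B i) \<le> (\<Sum>i\<in>I. card (B i))"
    by (rule card_UN_le[OF assms(1)])
  also have "\<dots> \<le> card I * b"
    using sum_bounded_above[of I "\<lambda>i. card (B i)" b] assms(2) by simp
  finally show ?thesis .
qed

lemma not_translate_coverable_finite_witness:
  fixes U :: "'a::euclidean_space set"
  assumes "subspace U" "dim U + j = k" "k \<le> DIM('a)" "\<not> translate_coverable U t k A"
  shows "\<exists>B\<subseteq>A. finite B \<and> card B \<le> witness_bound t j \<and> \<not> translate_coverable U t k B"
  using assms
proof (induction j arbitrary: U A)
  case 0
  then obtain S where S: "S \<subseteq> A" "finite S" "card S = Suc t" "pairwise (\<lambda>x y. x - y \<notin> U) S"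
    using exists_separated_subset[of U k t A] by auto
  moreover have "\<not> translate_coverable U t k S"
    using separated_not_translate_coverable[of U k S t] S(2-4) 0 by simp
  ultimately show ?case
    by (intro exI[of _ S]) simp
next
  case (Suc j)
  obtain S where S: "S \<subseteq> A" "finite S" "card S = Suc t" "pairwise (\<lambda>x y. x - y \<notin> U) S"
    using exists_separated_subset[of U k t A] Suc.prems by auto
  have "\<exists>B'\<subseteq>A. finite B' \<and> card B' \<le> witness_bound t j
          \<and> \<not> translate_coverable (span (insert (x - y) U)) t k B'"
    if xy: "x \<in> S" "y \<in> S" "x \<noteq> y" for x y
  proof (rule Suc.IH)
    have "x - y \<notin> span U"
      unfolding span_eq_iff[THEN iffD2, OF Suc.prems(1)]
      using S(4) xy unfolding pairwise_def by simp
    then show "dim (span (insert (x - y) U)) + j = k"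
      using Suc.prems(2) by (simp add: dim_insert)
    have "U \<subseteq> span (insert (x - y) U)"
      by (meson span_superset subset_insertI subset_trans)
    then show "\<not> translate_coverable (span (insert (x - y) U)) t k A"
      using Suc.prems(4) translate_coverable_mono[OF _ _ order_refl] by blast
  qed (use Suc.prems(3) in simp_all)
  then obtain B where B: "\<And>x y. x \<in> S \<Longrightarrow> y \<in> S \<Longrightarrow> x \<noteq> y \<Longrightarrow>
      B x y \<subseteq> A \<and> finite (B x y) \<and> card (B x y) \<le> witness_bound t j
      \<and> \<not> translate_coverable (span (insert (x - y) U)) t k (B x y)"
    by metis
  let ?W = "S \<union> (\<Union>x\<in>S. \<Union>y\<in>S - {x}. B x y)"
  have "card (\<Union>y\<in>S - {x}. B x y) \<le> t * witness_bound t j" if "x \<in> S" for x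
  proof -
    have "card (\<Union>y\<in>S - {x}. B x y) \<le> card (S - {x}) * witness_bound t j"
      using S(2) B that by (intro card_UN_le_mult) auto
    then show ?thesis
      using S(3) that by (simp add: card_Diff_singleton)
  qed
  then have "card (\<Union>x\<in>S. \<Union>y\<in>S - {x}. B x y) \<le> card S * (t * witness_bound t j)"
    by (rule card_UN_le_mult[OF S(2)])
  then have "card ?W \<le> witness_bound t (Suc j)"
    using card_Un_le[of S "\<Union>x\<in>S. \<Union>y\<in>S - {x}. B x y"] S(3) by (simp add: algebra_simps)
  moreover have "?W \<subseteq> A" "finite ?W"
    using S B by auto
  moreover have "\<not> translate_coverable U t k ?W"
    using separated_union_not_translate_coverable S(2,3) B by blast
  ultimately show ?case by blast
qed

theorem lemma4p2:
  fixes t k :: nat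
  assumes "t \<ge> 1" and "k < CARD('n::finite)"
  shows "\<exists>C T::nat. T \<ge> 1 \<and>
           (\<forall>A :: (real ^ 'n) set. P_prop A T k \<longrightarrow>
              (\<exists>B. B \<subseteq> A \<and> finite B \<and> card B \<le> C \<and> P_prop B t k))"
proof -
  have "\<exists>B. B \<subseteq> A \<and> finite B \<and> card B \<le> witness_bound t k \<and> P_prop B t k"
    if "P_prop A t k" for A :: "(real ^ 'n) set"
    using not_translate_coverable_finite_witness[of "{0::real ^ 'n}" k k] assms(2) that
    by (simp add: P_prop_iff_not_translate_coverable_0 subspace_single_0)
  then show ?thesis
    using assms(1) by blast
qed

end
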